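(* Let $\mathcal{C}_1$ be an arbitrary $(n_1,k_1)$ systematic binary linear code with generator matrix $\boldsymbol{G}$ (a $k_1\times n_1$ matrix over $\mathbb{F}_2$), and let $\mathcal{S}_\nu$ be the length-$\nu$ systematic single parity-check code. Let $\mathcal{C}$ be the product code consisting of all $\nu\times n_1$ binary arrays whose rows are codewords of $\mathcal{C}_1$ and whose columns are codewords of $\mathcal{S}_\nu$ (i.e., have even Hamming weight). Then the weight enumerator function of $\mathcal{C}$ is $$A_{\mathcal{C}}(z) = 2^{-k_1}\sum_{\boldsymbol{v}\in\{0,1\}^{k_1}}\left(\sum_{\boldsymbol{u}\in\{0,1\}^{k_1}}(-1)^{\boldsymbol{u}\cdot\boldsymbol{v}^{\mathrm{T}}} z^{w_{\mathrm{H}}(\boldsymbol{u}\boldsymbol{G})}\right)^{\nu}.$$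
   Context: $w_{\mathrm{H}}(\cdot)$ denotes Hamming weight; $\boldsymbol{u}\boldsymbol{G}$ is computed over $\mathbb{F}_2$; $\boldsymbol{u}\cdot\boldsymbol{v}^{\mathrm{T}}=\sum_i u_iv_i$ (only its parity matters). The weight enumerator function of a binary code $\mathcal{C}$ of length $N$ is $A_{\mathcal{C}}(z) = \sum_{i=0}^{N} A_i z^i$, where $A_i$ is the number of codewords of Hamming weight $i$. *)

theory Defs
  imports Complex_Main
begin

text \<open>Binary vectors of length m are functions nat => bool that vanish outside {0..<m}.
  Binary matrices (generator matrix, arrays) are nat => nat => bool, only the entries
  in range matter.\<close>

definition bvecs :: "nat \<Rightarrow> (nat \<Rightarrow> bool) set" where
  "bvecs m = {u. \<forall>i. m \<le> i \<longrightarrow> \<not> u i}"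

definition hamming_weight :: "nat \<Rightarrow> (nat \<Rightarrow> bool) \<Rightarrow> nat" where
  "hamming_weight m x = card {j. j < m \<and> x j}"

text \<open>Parity-relevant inner product u . v^T over the first k coordinates.\<close>
definition dotp :: "nat \<Rightarrow> (nat \<Rightarrow> bool) \<Rightarrow> (nat \<Rightarrow> bool) \<Rightarrow> nat" where
  "dotp k u v = card {i. i < k \<and> u i \<and> v i}"

definition encode :: "nat \<Rightarrow> nat \<Rightarrow> (nat \<Rightarrow> nat \<Rightarrow> bool) \<Rightarrow> (nat \<Rightarrow> bool) \<Rightarrow> (nat \<Rightarrow> bool)" where
  "encode k n G u = (\<lambda>j. j < n \<and> odd (card {i. i < k \<and> u i \<and> G i j}))"

definition lin_code :: "nat \<Rightarrow> nat \<Rightarrow> (nat \<Rightarrow> nat \<Rightarrow> bool) \<Rightarrow> (nat \<Rightarrow> bool) set" where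
  "lin_code k n G = encode k n G ` bvecs k"

definition systematic :: "nat \<Rightarrow> nat \<Rightarrow> (nat \<Rightarrow> nat \<Rightarrow> bool) \<Rightarrow> bool" where
  "systematic k n G \<longleftrightarrow> k \<le> n \<and> (\<forall>i<k. \<forall>j<k. G i j = (i = j))"

definition spc_code :: "nat \<Rightarrow> (nat \<Rightarrow> bool) set" where
  "spc_code nu = {c \<in> bvecs nu. even (hamming_weight nu c)}"

definition product_code :: "nat \<Rightarrow> nat \<Rightarrow> (nat \<Rightarrow> bool) set \<Rightarrow> (nat \<Rightarrow> nat \<Rightarrow> bool) set" where
  "product_code nu n C1 = {X. (\<forall>r j. \<not> (r < nu \<and> j < n) \<longrightarrow> \<not> X r j)
       \<and> (\<forall>r<nu. (\<lambda>j. X r j) \<in> C1)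
       \<and> (\<forall>j<n. (\<lambda>r. X r j) \<in> spc_code nu)}"

definition array_weight :: "nat \<Rightarrow> nat \<Rightarrow> (nat \<Rightarrow> nat \<Rightarrow> bool) \<Rightarrow> nat" where
  "array_weight nu n X = card {(r, j). r < nu \<and> j < n \<and> X r j}"

definition array_weight_enum :: "nat \<Rightarrow> nat \<Rightarrow> (nat \<Rightarrow> nat \<Rightarrow> bool) set \<Rightarrow> real \<Rightarrow> real" where
  "array_weight_enum nu n C z =
     (\<Sum>i = 0..nu * n. real (card {X \<in> C. array_weight nu n X = i}) * z ^ i)"

end

theory Submission
  imports Defs
begin

(* An array of the product code is a sequence of nu codewords of C_1 whose column parities
   all vanish. More generally, let E_m(w) enumerate by weight the arrays with m rows in C_1 and
   column-parity vector w. Splitting off the last row c gives E_(m+1)(w) = sum_c z^wt(c) E_m(w + c).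
   As G is systematic, u |-> uG is injective and linear, so with w = sG this recurrence is a
   convolution on F_2^k, which the characters (-1)^(s.v) diagonalise:
   E_m(sG) = 2^-k sum_v (-1)^(s.v) F(v)^m with F(v) = sum_u (-1)^(u.v) z^wt(uG).
   The theorem is the case s = 0. *)

definition bxor :: "(nat \<Rightarrow> bool) \<Rightarrow> (nat \<Rightarrow> bool) \<Rightarrow> nat \<Rightarrow> bool" where
  "bxor a b = (\<lambda>i. a i \<noteq> b i)"

lemma bvecs_eq_image_Pow: "bvecs k = (\<lambda>S i. i \<in> S) ` Pow {..<k}"
proof
  show "bvecs k \<subseteq> (\<lambda>S i. i \<in> S) ` Pow {..<k}"
  proof
    fix u assume "u \<in> bvecs k"
    then have "{i. u i} \<in> Pow {..<k}" by (auto simp: bvecs_def not_le[symmetric])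
    then show "u \<in> (\<lambda>S i. i \<in> S) ` Pow {..<k}" by (auto intro!: image_eqI[of u])
  qed
qed (auto simp: bvecs_def)

lemma finite_bvecs: "finite (bvecs k)"
  unfolding bvecs_eq_image_Pow by simp

lemma card_bvecs: "card (bvecs k) = 2 ^ k"
proof -
  have "inj_on (\<lambda>S i. i \<in> S) (Pow {..<k})"
    by (auto simp: inj_on_def fun_eq_iff)
  then show ?thesis unfolding bvecs_eq_image_Pow by (simp add: card_image card_Pow)
qed

lemma bvecs_eq_zero_iff: "u \<in> bvecs n \<Longrightarrow> u = (\<lambda>_. False) \<longleftrightarrow> (\<forall>j<n. \<not> u j)"
  unfolding bvecs_def fun_eq_iff by (metis mem_Collect_eq not_le)

lemma bxor_in_bvecs: "u \<in> bvecs k \<Longrightarrow> v \<in> bvecs k \<Longrightarrow> bxor u v \<in> bvecs k"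
  by (auto simp: bvecs_def bxor_def)

lemma bxor_bxor_cancel: "bxor (bxor u v) v = u"
  by (auto simp: bxor_def)

lemma odd_card_sym_diff:
  assumes "finite A" "finite B"
  shows "odd (card (sym_diff A B)) \<longleftrightarrow> odd (card A) \<noteq> odd (card B)"
proof -
  have "card (sym_diff A B) = card (A - B) + card (B - A)"
    by (rule card_Un_disjoint) (use assms in auto)
  moreover have "card A = card (A \<inter> B) + card (A - B)" "card B = card (A \<inter> B) + card (B - A)"
    using assms card_Int_Diff[of A B] card_Int_Diff[of B A] by (simp_all add: Int_commute)
  ultimately show ?thesis by presburger
qed

lemma odd_card_bxor:
  "odd (card {i. i < k \<and> bxor u v i \<and> c i}) \<longleftrightarrow>
     odd (card {i. i < k \<and> u i \<and> c i}) \<noteq> odd (card {i. i < k \<and> v i \<and> c i})"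
proof -
  have "{i. i < k \<and> bxor u v i \<and> c i} = sym_diff {i. i < k \<and> u i \<and> c i} {i. i < k \<and> v i \<and> c i}"
    by (auto simp: bxor_def)
  then show ?thesis by (simp add: odd_card_sym_diff)
qed

lemma dotp_commute: "dotp k u v = dotp k v u"
  unfolding dotp_def by (simp add: conj_commute)

lemma minus_one_power_dotp_bxor:
  "(-1::'a::ring_1) ^ dotp k (bxor u w) v = (-1) ^ dotp k u v * (-1) ^ dotp k w v"
  using odd_card_bxor[of k u w v] by (auto simp: dotp_def minus_one_power_iff)

lemma sum_minus_one_power_dotp:
  assumes s: "s \<in> bvecs k"
  shows "(\<Sum>v\<in>bvecs k. (-1::real) ^ dotp k s v) = (if s = (\<lambda>_. False) then 2 ^ k else 0)"
proof (cases "s = (\<lambda>_. False)")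
  case True
  then show ?thesis by (simp add: dotp_def card_bvecs)
next
  case False
  then obtain i0 where i0: "s i0" by auto
  with s have "i0 < k" by (auto simp: bvecs_def not_less[symmetric])
  define e where "e = (\<lambda>i::nat. i = i0)"
  have e: "e \<in> bvecs k" using \<open>i0 < k\<close> by (auto simp: bvecs_def e_def)
  have "dotp k s e = 1"
  proof -
    have "{i. i < k \<and> s i \<and> e i} = {i0}" using \<open>i0 < k\<close> i0 by (auto simp: e_def)
    then show ?thesis by (simp add: dotp_def)
  qed
  \<comment> \<open>Translating by \<open>e\<close> permutes \<open>bvecs k\<close> and flips the sign of every term.\<close>
  have "(\<Sum>v\<in>bvecs k. (-1::real) ^ dotp k s v) = (\<Sum>v\<in>bvecs k. (-1) ^ dotp k s (bxor v e))"
    by (rule sum.reindex_bij_witness[where i="\<lambda>v. bxor v e" and j="\<lambda>v. bxor v e"])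
       (auto simp: bxor_bxor_cancel bxor_in_bvecs e)
  also have "\<dots> = - (\<Sum>v\<in>bvecs k. (-1) ^ dotp k s v)"
    by (simp add: dotp_commute[of k s] minus_one_power_dotp_bxor sum_negf
        \<open>dotp k s e = 1\<close>[unfolded dotp_commute[of k s]])
  finally show ?thesis using False by simp
qed

lemma encode_in_bvecs: "encode k n G u \<in> bvecs n"
  by (auto simp: encode_def bvecs_def)

lemma encode_zero: "encode k n G (\<lambda>_. False) = (\<lambda>_. False)"
  by (auto simp: encode_def)

lemma encode_bxor: "encode k n G (bxor u v) = bxor (encode k n G u) (encode k n G v)"
  using odd_card_bxor[of k u v] by (auto simp: encode_def bxor_def)

lemma encode_systematic:
  assumes "systematic k n G" "j < k"
  shows "encode k n G u j = u j"
proof -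
  have "{i. i < k \<and> u i \<and> G i j} = (if u j then {j} else {})"
    using assms unfolding systematic_def by auto
  then show ?thesis using assms unfolding encode_def systematic_def by auto
qed

lemma inj_on_encode_systematic:
  assumes "systematic k n G"
  shows "inj_on (encode k n G) (bvecs k)"
proof (rule inj_onI)
  fix u v assume u: "u \<in> bvecs k" and v: "v \<in> bvecs k" and eq: "encode k n G u = encode k n G v"
  show "u = v"
  proof
    fix i
    show "u i = v i"
    proof (cases "i < k")
      case True
      then show ?thesis using eq encode_systematic[OF assms True] by metis
    next
      case False
      then show ?thesis using u v by (simp add: bvecs_def)
    qed
  qed
qed

definition arrays :: "nat \<Rightarrow> nat \<Rightarrow> (nat \<Rightarrow> nat \<Rightarrow> bool) set" where
  "arrays m n = {X. \<forall>r j. X r j \<longrightarrow> r < m \<and> j < n}"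

definition col_parity :: "nat \<Rightarrow> (nat \<Rightarrow> nat \<Rightarrow> bool) \<Rightarrow> nat \<Rightarrow> bool" where
  "col_parity m X j = odd (card {r. r < m \<and> X r j})"

definition syndrome_arrays ::
    "nat \<Rightarrow> nat \<Rightarrow> (nat \<Rightarrow> bool) set \<Rightarrow> (nat \<Rightarrow> bool) \<Rightarrow> (nat \<Rightarrow> nat \<Rightarrow> bool) set" where
  "syndrome_arrays m n C w =
     {X \<in> arrays m n. (\<forall>r<m. X r \<in> C) \<and> (\<forall>j<n. col_parity m X j = w j)}"

definition syndrome_enum ::
    "nat \<Rightarrow> nat \<Rightarrow> (nat \<Rightarrow> bool) set \<Rightarrow> (nat \<Rightarrow> bool) \<Rightarrow> real \<Rightarrow> real" where
  "syndrome_enum m n C w z = (\<Sum>X\<in>syndrome_arrays m n C w. z ^ array_weight m n X)"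

lemma arraysD: "X \<in> arrays m n \<Longrightarrow> X r j \<Longrightarrow> r < m \<and> j < n"
  by (simp add: arrays_def)

lemma finite_arrays: "finite (arrays m n)"
proof (rule finite_subset)
  show "arrays m n \<subseteq> (\<lambda>S r j. (r, j) \<in> S) ` Pow ({..<m} \<times> {..<n})"
  proof
    fix X assume "X \<in> arrays m n"
    then have "{(r, j). X r j} \<in> Pow ({..<m} \<times> {..<n})" by (auto simp: arrays_def)
    then show "X \<in> (\<lambda>S r j. (r, j) \<in> S) ` Pow ({..<m} \<times> {..<n})"
      by (intro image_eqI[where x="{(r, j). X r j}"]) auto
  qed
qed simp

lemma finite_syndrome_arrays: "finite (syndrome_arrays m n C w)"
  using finite_arrays by (simp add: syndrome_arrays_def)

lemma col_parity_Suc: "col_parity (Suc m) X j \<longleftrightarrow> col_parity m X j \<noteq> X m j"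
proof -
  have "{r. r < Suc m \<and> X r j} = (if X m j then insert m else id) {r. r < m \<and> X r j}"
    by (auto simp: less_Suc_eq)
  then show ?thesis by (simp add: col_parity_def)
qed

lemma col_parity_fun_upd_self: "col_parity m (X(m := c)) = col_parity m X"
proof
  fix j
  have "{r. r < m \<and> (X(m := c)) r j} = {r. r < m \<and> X r j}" by auto
  then show "col_parity m (X(m := c)) j = col_parity m X j" by (simp only: col_parity_def)
qed

lemma array_weight_Suc: "array_weight (Suc m) n X = array_weight m n X + hamming_weight n (X m)"
proof -
  let ?A = "{(r, j). r < m \<and> j < n \<and> X r j}" and ?B = "{j. j < n \<and> X m j}"
  have "{(r, j). r < Suc m \<and> j < n \<and> X r j} = ?A \<union> Pair m ` ?B"
    by (auto simp: less_Suc_eq)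
  moreover have "card (?A \<union> Pair m ` ?B) = card ?A + card (Pair m ` ?B)"
    by (rule card_Un_disjoint) (auto intro: finite_subset[of _ "{..<m} \<times> {..<n}"])
  moreover have "card (Pair m ` ?B) = card ?B"
    by (simp add: card_image inj_on_def)
  ultimately show ?thesis unfolding array_weight_def hamming_weight_def by simp
qed

lemma array_weight_fun_upd_self: "array_weight m n (X(m := c)) = array_weight m n X"
proof -
  have "{(r, j). r < m \<and> j < n \<and> (X(m := c)) r j} = {(r, j). r < m \<and> j < n \<and> X r j}"
    by auto
  then show ?thesis by (simp only: array_weight_def)
qed

lemma array_weight_le: "array_weight m n X \<le> m * n"
proof -
  have "array_weight m n X \<le> card ({..<m} \<times> {..<n})"
    unfolding array_weight_def by (rule card_mono) auto
  then show ?thesis by simp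
qed

lemma syndrome_arrays_0:
  "syndrome_arrays 0 n C w = (if \<forall>j<n. \<not> w j then {\<lambda>_ _. False} else {})"
  by (auto simp: syndrome_arrays_def arrays_def col_parity_def fun_eq_iff)

lemma arrays_Suc_iff: "X \<in> arrays (Suc m) n \<longleftrightarrow> X m \<in> bvecs n \<and> X(m := (\<lambda>_. False)) \<in> arrays m n"
proof
  assume "X \<in> arrays (Suc m) n"
  then show "X m \<in> bvecs n \<and> X(m := (\<lambda>_. False)) \<in> arrays m n"
    by (auto simp: arrays_def bvecs_def less_Suc_eq dest: leD)
next
  assume X: "X m \<in> bvecs n \<and> X(m := (\<lambda>_. False)) \<in> arrays m n"
  show "X \<in> arrays (Suc m) n"
    unfolding arrays_def
  proof (intro CollectI allI impI)
    fix r j assume "X r j"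
    show "r < Suc m \<and> j < n"
    proof (cases "r = m")
      case True
      then show ?thesis using X \<open>X r j\<close> by (auto simp: bvecs_def not_le)
    next
      case False
      then have "(X(m := (\<lambda>_. False))) r j" using \<open>X r j\<close> by simp
      then show ?thesis using arraysD X by fastforce
    qed
  qed
qed

lemma syndrome_arrays_Suc_iff:
  assumes "C \<subseteq> bvecs n"
  shows "X \<in> syndrome_arrays (Suc m) n C w \<longleftrightarrow>
    X m \<in> C \<and> X(m := (\<lambda>_. False)) \<in> syndrome_arrays m n C (bxor w (X m))"
  using assms unfolding syndrome_arrays_def
  by (auto simp: arrays_Suc_iff bxor_def col_parity_Suc col_parity_fun_upd_self less_Suc_eq)

lemma syndrome_arrays_row_beyond: "X \<in> syndrome_arrays m n C w \<Longrightarrow> X m = (\<lambda>_. False)"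
  by (auto simp: syndrome_arrays_def arrays_def)

lemma bij_betw_split_last_row:
  assumes "C \<subseteq> bvecs n"
  shows "bij_betw (\<lambda>X. (X m, X(m := (\<lambda>_. False)))) (syndrome_arrays (Suc m) n C w)
    (SIGMA c:C. syndrome_arrays m n C (bxor w c))"
proof (rule bij_betw_byWitness[where f'="\<lambda>(c, Y). Y(m := c)"])
  show "(\<lambda>X. (X m, X(m := (\<lambda>_. False)))) ` syndrome_arrays (Suc m) n C w \<subseteq>
      (SIGMA c:C. syndrome_arrays m n C (bxor w c))"
    using syndrome_arrays_Suc_iff[OF assms] by auto
  show "(\<lambda>(c, Y). Y(m := c)) ` (SIGMA c:C. syndrome_arrays m n C (bxor w c)) \<subseteq>
      syndrome_arrays (Suc m) n C w"
    using syndrome_arrays_Suc_iff[OF assms] syndrome_arrays_row_beyond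
    by (fastforce simp: fun_upd_idem)
  show "\<forall>p\<in>SIGMA c:C. syndrome_arrays m n C (bxor w c).
      ((\<lambda>(c, Y). Y(m := c)) p m, ((\<lambda>(c, Y). Y(m := c)) p)(m := (\<lambda>_. False))) = p"
    using syndrome_arrays_row_beyond by (force simp: fun_upd_idem)
qed simp

lemma syndrome_enum_Suc:
  assumes "C \<subseteq> bvecs n"
  shows "syndrome_enum (Suc m) n C w z =
    (\<Sum>c\<in>C. z ^ hamming_weight n c * syndrome_enum m n C (bxor w c) z)"
proof -
  have "finite C" using assms finite_bvecs by (rule finite_subset)
  have "syndrome_enum (Suc m) n C w z =
      (\<Sum>X\<in>syndrome_arrays (Suc m) n C w.
        z ^ hamming_weight n (X m) * z ^ array_weight m n (X(m := (\<lambda>_. False))))"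
    by (simp add: syndrome_enum_def array_weight_Suc array_weight_fun_upd_self power_add mult.commute)
  also have "\<dots> = (\<Sum>(c, Y)\<in>(SIGMA c:C. syndrome_arrays m n C (bxor w c)).
      z ^ hamming_weight n c * z ^ array_weight m n Y)"
    by (simp flip: sum.reindex_bij_betw[OF bij_betw_split_last_row[OF assms]])
  also have "\<dots> = (\<Sum>c\<in>C. z ^ hamming_weight n c * syndrome_enum m n C (bxor w c) z)"
    using \<open>finite C\<close>
    by (simp add: sum.Sigma[symmetric] finite_syndrome_arrays syndrome_enum_def sum_distrib_left)
  finally show ?thesis .
qed

definition hadamard_weight_enum ::
    "nat \<Rightarrow> nat \<Rightarrow> (nat \<Rightarrow> nat \<Rightarrow> bool) \<Rightarrow> real \<Rightarrow> (nat \<Rightarrow> bool) \<Rightarrow> real" where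
  "hadamard_weight_enum k n G z v =
     (\<Sum>u\<in>bvecs k. (-1) ^ dotp k u v * z ^ hamming_weight n (encode k n G u))"

lemma syndrome_enum_encode:
  assumes inj: "inj_on (encode k n G) (bvecs k)" and s: "s \<in> bvecs k"
  shows "syndrome_enum m n (lin_code k n G) (encode k n G s) z =
    (1 / 2 ^ k) * (\<Sum>v\<in>bvecs k. (-1) ^ dotp k s v * hadamard_weight_enum k n G z v ^ m)"
  using s
proof (induction m arbitrary: s)
  case 0
  have "(\<forall>j<n. \<not> encode k n G s j) \<longleftrightarrow> encode k n G s = encode k n G (\<lambda>_. False)"
    by (simp add: bvecs_eq_zero_iff[OF encode_in_bvecs] encode_zero)
  also have "\<dots> \<longleftrightarrow> s = (\<lambda>_. False)"
    using inj_onD[OF inj _ 0] by (auto simp: bvecs_def)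
  finally have "syndrome_enum 0 n (lin_code k n G) (encode k n G s) z =
      (if s = (\<lambda>_. False) then 1 else 0)"
    by (simp add: syndrome_enum_def syndrome_arrays_0 array_weight_def)
  also have "\<dots> = (1 / 2 ^ k) * (\<Sum>v\<in>bvecs k. (-1) ^ dotp k s v)"
    using sum_minus_one_power_dotp[OF 0] by simp
  finally show ?case by simp
next
  case (Suc m)
  let ?B = "bvecs k" and ?e = "encode k n G" and ?F = "hadamard_weight_enum k n G z"
  have "lin_code k n G \<subseteq> bvecs n"
    by (auto simp: lin_code_def encode_in_bvecs)
  then have "syndrome_enum (Suc m) n (lin_code k n G) (?e s) z =
      (\<Sum>u\<in>?B. z ^ hamming_weight n (?e u) * syndrome_enum m n (lin_code k n G) (?e (bxor s u)) z)"
    by (simp add: syndrome_enum_Suc lin_code_def sum.reindex[OF inj] encode_bxor)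
  also have "\<dots> = (\<Sum>u\<in>?B. z ^ hamming_weight n (?e u) *
      ((1 / 2 ^ k) * (\<Sum>v\<in>?B. (-1) ^ dotp k (bxor s u) v * ?F v ^ m)))"
    using Suc by (simp add: bxor_in_bvecs)
  also have "\<dots> = (1 / 2 ^ k) * (\<Sum>u\<in>?B. \<Sum>v\<in>?B.
      (-1) ^ dotp k s v * ?F v ^ m * ((-1) ^ dotp k u v * z ^ hamming_weight n (?e u)))"
    by (simp add: minus_one_power_dotp_bxor sum_distrib_left mult_ac)
  also have "\<dots> = (1 / 2 ^ k) * (\<Sum>v\<in>?B. (-1) ^ dotp k s v * ?F v ^ m *
      (\<Sum>u\<in>?B. (-1) ^ dotp k u v * z ^ hamming_weight n (?e u)))"
    by (subst sum.swap) (simp add: sum_distrib_left)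
  also have "\<dots> = (1 / 2 ^ k) * (\<Sum>v\<in>?B. (-1) ^ dotp k s v * ?F v ^ Suc m)"
    by (simp add: hadamard_weight_enum_def mult_ac)
  finally show ?case .
qed

lemma array_weight_enum_eq_sum:
  assumes "finite C"
  shows "array_weight_enum m n C z = (\<Sum>X\<in>C. z ^ array_weight m n X)"
proof -
  have "(\<Sum>X\<in>C. z ^ array_weight m n X) =
      (\<Sum>i\<in>{0..m * n}. \<Sum>X\<in>{X \<in> C. array_weight m n X = i}. z ^ array_weight m n X)"
    using assms array_weight_le by (intro sum.group[symmetric]) auto
  then show ?thesis by (simp add: array_weight_enum_def)
qed

lemma product_code_eq_syndrome_arrays: "product_code m n C = syndrome_arrays m n C (\<lambda>_. False)"
proof -
  have arrays: "(\<forall>r j. \<not> (r < m \<and> j < n) \<longrightarrow> \<not> X r j) \<longleftrightarrow> X \<in> arrays m n" for X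
    by (auto simp: arrays_def)
  have "(\<lambda>r. X r j) \<in> spc_code m \<longleftrightarrow> \<not> col_parity m X j" if "X \<in> arrays m n" for X j
  proof -
    have "(\<lambda>r. X r j) \<in> bvecs m"
      unfolding bvecs_def
    proof (intro CollectI allI impI)
      fix r assume "m \<le> r"
      then show "\<not> X r j" using arraysD[OF that] by fastforce
    qed
    then show ?thesis by (simp add: spc_code_def hamming_weight_def col_parity_def)
  qed
  then show ?thesis
    unfolding product_code_def syndrome_arrays_def arrays by auto
qed

theorem theorem3:
  fixes k1 n1 \<nu> :: nat and G :: "nat \<Rightarrow> nat \<Rightarrow> bool" and z :: real
  assumes "systematic k1 n1 G"
  shows "array_weight_enum \<nu> n1 (product_code \<nu> n1 (lin_code k1 n1 G)) z =
    (1 / 2 ^ k1) * (\<Sum>v\<in>bvecs k1.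
        (\<Sum>u\<in>bvecs k1. (-1) ^ dotp k1 u v * z ^ hamming_weight n1 (encode k1 n1 G u)) ^ \<nu>)"
proof -
  have "array_weight_enum \<nu> n1 (product_code \<nu> n1 (lin_code k1 n1 G)) z =
      syndrome_enum \<nu> n1 (lin_code k1 n1 G) (encode k1 n1 G (\<lambda>_. False)) z"
    by (simp add: array_weight_enum_eq_sum product_code_eq_syndrome_arrays finite_syndrome_arrays
        syndrome_enum_def encode_zero)
  also have "\<dots> = (1 / 2 ^ k1) *
      (\<Sum>v\<in>bvecs k1. (-1) ^ dotp k1 (\<lambda>_. False) v * hadamard_weight_enum k1 n1 G z v ^ \<nu>)"
    by (rule syndrome_enum_encode[OF inj_on_encode_systematic[OF assms]]) (simp add: bvecs_def)
  finally show ?thesis by (simp add: dotp_def hadamard_weight_enum_def)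
qed

end
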